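(* Let $W$ be a $V$-module, $z,z_1$ nonzero complex numbers and $p\in\mathbb Z$. Then the linear automorphism $e^{l_p(z)L^*(0)}$ of $W^*$ maps $\mathcal D_{P(z_1)}(W)$ onto $\mathcal D_{P(zz_1)}(W)$, and for all $v\in V$, $\alpha\in\mathcal D_{P(z_1)}(W)$: $$e^{l_p(z)L^*(0)}Y^R_{P(z_1)}(v,x)\alpha=Y^R_{P(zz_1)}(z^{L(0)}v,zx)e^{l_p(z)L^*(0)}\alpha,\qquad e^{l_p(z)L^*(0)}Y^L_{P(z_1)}(v,x)\alpha=Y^L_{P(zz_1)}(z^{L(0)}v,zx)e^{l_p(z)L^*(0)}\alpha.$$
   Context: $V$ is a vertex operator algebra with vacuum $\mathbf 1$, Virasoro element $\omega$, $Y(\omega,x)=\sum_{n}L(n)x^{-n-2}$, $V=\coprod_{n\in\mathbb Z}V_{(n)}$ with $L(0)=n$ on $V_{(n)}$; $z^{L(0)}v=z^nv$ for $v\in V_{(n)}$. A $V$-module is a vector space $W=\coprod_{h\in\mathbb C}W_{(h)}$ with $Y_W:V\to(\mathrm{End}\,W)[[x,x^{-1}]]$ satisfying truncation $Y_W(v,x)w\in W((x))$, $Y_W(\mathbf 1,x)=\mathrm{id}$, the Jacobi identity $x_0^{-1}\delta(\frac{x_1-x_2}{x_0})Y_W(u,x_1)Y_W(v,x_2)-x_0^{-1}\delta(\frac{x_2-x_1}{-x_0})Y_W(v,x_2)Y_W(u,x_1)=x_2^{-1}\delta(\frac{x_1-x_0}{x_2})Y_W(Y(u,x_0)v,x_2)$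 (with $\delta(x)=\sum_nx^n$, binomials expanded in nonnegative powers of the second variable), $L(0)=h$ on $W_{(h)}$, $\dim W_{(h)}<\infty$, and $W_{(h+n)}=0$ for sufficiently negative integers $n$. $W^*=\prod_hW_{(h)}^*$. $\log z=\log|z|+i\arg z$ with $0\le\arg z<2\pi$, $l_p(z)=\log z+2p\pi i$; $e^{l_p(z)L^*(0)}$ acts on $W_{(h)}^*\subset W^*$ as multiplication by $e^{hl_p(z)}$. For $v\in V$ let $Y^o(v,x)=Y_W(e^{xL(1)}(-x^{-2})^{L(0)}v,x^{-1})$. For a nonzero complex $z'$, $\alpha\in W^*$ is a $P(z')$-linear functional if for all $v\in V,w\in W$ the series $\langle\alpha,Y^o(v,x)w\rangle$ converges absolutely in $|x|>|z'|$ to a rational function in $\mathbb C[x,x^{-1},(x-z')^{-1}]$, with pole orders at $0,z'$ bounded independently of $w$ for fixed $v$; $\mathcal D_{P(z')}(W)$ is the space of these. With $\iota_{x;\infty},\iota_{x;0}$ the Laurent expansion maps of rational functions at $x=\infty$ and $x=0$ and $f_{v,\alpha,w}=\iota_{x;\infty}^{-1}\langle\alpha,Y^o(v,x)w\rangle$, define for $\alpha\in\mathcal D_{P(z')}(W)$: $\langle Y^R_{P(z')}(v,x)\alpha,w\rangle=\iota_{x;0}f_{v,\alpha,w}(x)$ and $\langle Y^L_{P(z')}(v,x)\alpha,w\rangle=\iota_{x;0}\big(f_{v,\alpha,w}(x+z')\big)$. *)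

theory Defs
  imports "HOL-Analysis.Analysis" "HOL-Computational_Algebra.Polynomial"
begin

definition gcomps :: "('i \<Rightarrow> 'w::ab_group_add set) \<Rightarrow> 'w \<Rightarrow> 'i \<Rightarrow> 'w" where
  "gcomps E w = (THE f. finite {h. f h \<noteq> 0} \<and> (\<forall>h. f h \<in> E h) \<and> w = sum f {h. f h \<noteq> 0})"

definition is_dirsum :: "('i \<Rightarrow> 'w::ab_group_add set) \<Rightarrow> bool" where
  "is_dirsum E \<longleftrightarrow> (\<forall>w. \<exists>S f. finite S \<and> (\<forall>h\<in>S. f h \<in> E h) \<and> w = sum f S)"

definition fin_dim :: "(complex \<Rightarrow> 'w::ab_group_add \<Rightarrow> 'w) \<Rightarrow> 'w set \<Rightarrow> bool" where
  "fin_dim s U \<longleftrightarrow> (\<exists>B. finite B \<and> U \<subseteq> module.span s B)"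

text \<open>Mode conventions: Y v n w is the coefficient v_n w of x^(-n-1) in Y(v,x)w.\<close>
definition mode_trunc :: "('v \<Rightarrow> int \<Rightarrow> 'w \<Rightarrow> 'w::ab_group_add) \<Rightarrow> bool" where
  "mode_trunc Y \<longleftrightarrow> (\<forall>v w. \<exists>N. \<forall>n\<ge>N. Y v n w = 0)"

definition bilinear_modes ::
  "(complex \<Rightarrow> 'v::ab_group_add \<Rightarrow> 'v) \<Rightarrow> (complex \<Rightarrow> 'w::ab_group_add \<Rightarrow> 'w)
   \<Rightarrow> ('v \<Rightarrow> int \<Rightarrow> 'w \<Rightarrow> 'w) \<Rightarrow> bool" where
  "bilinear_modes sV sW Y \<longleftrightarrow>
     (\<forall>n w. Vector_Spaces.linear sV sW (\<lambda>v. Y v n w)) \<and> (\<forall>v n. Vector_Spaces.linear sW sW (Y v n))"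

text \<open>The Jacobi identity, written coefficientwise: the coefficient of
  x0^(-l-1) x1^(-m-1) x2^(-n-1) of the Jacobi identity (Borcherds identity).
  All three sums over i are finite by truncation; K is any bound beyond which all terms vanish.\<close>
definition jacobi ::
  "('v \<Rightarrow> int \<Rightarrow> 'v \<Rightarrow> 'v::ab_group_add) \<Rightarrow> ('v \<Rightarrow> int \<Rightarrow> 'w \<Rightarrow> 'w::ab_group_add)
   \<Rightarrow> (complex \<Rightarrow> 'w \<Rightarrow> 'w) \<Rightarrow> bool" where
  "jacobi YV YM sM \<longleftrightarrow> (\<forall>u v w l m n (K::nat).
     (\<forall>i\<ge>K. YV u (l + int i) v = 0 \<and> YM v (n + int i) w = 0 \<and> YM u (m + int i) w = 0) \<longrightarrow>
     (\<Sum>i<K. sM (of_int m gchoose i) (YM (YV u (l + int i) v) (m + n - int i) w))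
     = (\<Sum>i<K. sM ((-1)^i * (of_int l gchoose i)) (YM u (l + m - int i) (YM v (n + int i) w))
              - sM ((-1)^i * (-1) powi l * (of_int l gchoose i)) (YM v (l + n - int i) (YM u (m + int i) w))))"

definition Vgr :: "(complex \<Rightarrow> 'v::ab_group_add \<Rightarrow> 'v) \<Rightarrow> ('v \<Rightarrow> int \<Rightarrow> 'v \<Rightarrow> 'v) \<Rightarrow> 'v \<Rightarrow> int \<Rightarrow> 'v set" where
  "Vgr sV Y \<omega> n = {v. Y \<omega> 1 v = sV (of_int n) v}"   (* V_(n): L(0) = n, where L(0) = omega_1 *)

definition is_VOA :: "(complex \<Rightarrow> 'v::ab_group_add \<Rightarrow> 'v) \<Rightarrow> ('v \<Rightarrow> int \<Rightarrow> 'v \<Rightarrow> 'v) \<Rightarrow> 'v \<Rightarrow> 'v \<Rightarrow> bool" where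
  "is_VOA sV Y one \<omega> \<longleftrightarrow>
     vector_space sV \<and> bilinear_modes sV sV Y \<and> mode_trunc Y \<and>
     is_dirsum (Vgr sV Y \<omega>) \<and> (\<forall>n. fin_dim sV (Vgr sV Y \<omega> n)) \<and>
     (\<exists>N. \<forall>n<N. Vgr sV Y \<omega> n = {0}) \<and>
     (\<forall>n w. Y one n w = (if n = -1 then w else 0)) \<and>
     (\<forall>v. (\<forall>n\<ge>0. Y v n one = 0) \<and> Y v (-1) one = v) \<and>
     jacobi Y Y sV \<and>
     (\<exists>c::complex. \<forall>m n v. Y \<omega> (m+1) (Y \<omega> (n+1) v) - Y \<omega> (n+1) (Y \<omega> (m+1) v)
         = sV (of_int (m - n)) (Y \<omega> (m+n+1) v)
           + (if m + n = 0 then sV ((of_int m ^ 3 - of_int m) / 12 * c) v else 0)) \<and>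
     \<omega> \<in> Vgr sV Y \<omega> 2 \<and>
     (\<forall>v n w. Y (Y \<omega> 0 v) n w = sV (- of_int n) (Y v (n - 1) w))"

definition Wgr :: "(complex \<Rightarrow> 'w::ab_group_add \<Rightarrow> 'w) \<Rightarrow> ('v \<Rightarrow> int \<Rightarrow> 'w \<Rightarrow> 'w) \<Rightarrow> 'v \<Rightarrow> complex \<Rightarrow> 'w set" where
  "Wgr sW YW \<omega> h = {w. YW \<omega> 1 w = sW h w}"

definition is_module ::
  "(complex \<Rightarrow> 'v::ab_group_add \<Rightarrow> 'v) \<Rightarrow> ('v \<Rightarrow> int \<Rightarrow> 'v \<Rightarrow> 'v) \<Rightarrow> 'v \<Rightarrow> 'v
   \<Rightarrow> (complex \<Rightarrow> 'w::ab_group_add \<Rightarrow> 'w) \<Rightarrow> ('v \<Rightarrow> int \<Rightarrow> 'w \<Rightarrow> 'w) \<Rightarrow> bool" where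
  "is_module sV Y one \<omega> sW YW \<longleftrightarrow>
     vector_space sW \<and> bilinear_modes sV sW YW \<and> mode_trunc YW \<and>
     (\<forall>n w. YW one n w = (if n = -1 then w else 0)) \<and>
     jacobi Y YW sW \<and>
     is_dirsum (Wgr sW YW \<omega>) \<and> (\<forall>h. fin_dim sW (Wgr sW YW \<omega> h)) \<and>
     (\<forall>h. \<exists>N. \<forall>n::int. n < N \<longrightarrow> Wgr sW YW \<omega> (h + of_int n) = {0})"

definition dual :: "(complex \<Rightarrow> 'w::ab_group_add \<Rightarrow> 'w) \<Rightarrow> ('w \<Rightarrow> complex) set" where
  "dual sW = {\<alpha>. Vector_Spaces.linear sW (*) \<alpha>}"

definition arg0 :: "complex \<Rightarrow> real" where
  "arg0 z = (THE t. 0 \<le> t \<and> t < 2 * pi \<and> z = of_real (cmod z) * exp (\<i> * of_real t))"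

definition logc :: "complex \<Rightarrow> complex" where
  "logc z = of_real (ln (cmod z)) + \<i> * of_real (arg0 z)"

definition lp :: "int \<Rightarrow> complex \<Rightarrow> complex" where
  "lp p z = logc z + 2 * of_int p * of_real pi * \<i>"

text \<open>e^{l L*(0)} on W*: multiplication by e^{h l} on W_(h)^*.\<close>
definition EL0 :: "(complex \<Rightarrow> 'w::ab_group_add \<Rightarrow> 'w) \<Rightarrow> ('v \<Rightarrow> int \<Rightarrow> 'w \<Rightarrow> 'w) \<Rightarrow> 'v
    \<Rightarrow> complex \<Rightarrow> ('w \<Rightarrow> complex) \<Rightarrow> ('w \<Rightarrow> complex)" where
  "EL0 sW YW \<omega> l \<alpha> = (\<lambda>w. let c = gcomps (Wgr sW YW \<omega>) w in
      \<Sum>h\<in>{h. c h \<noteq> 0}. exp (h * l) * \<alpha> (c h))"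

definition zL0 :: "(complex \<Rightarrow> 'v::ab_group_add \<Rightarrow> 'v) \<Rightarrow> ('v \<Rightarrow> int \<Rightarrow> 'v \<Rightarrow> 'v) \<Rightarrow> 'v
    \<Rightarrow> complex \<Rightarrow> 'v \<Rightarrow> 'v" where
  "zL0 sV Y \<omega> z v = (let c = gcomps (Vgr sV Y \<omega>) v in \<Sum>n\<in>{n. c n \<noteq> 0}. sV (z powi n) (c n))"

text \<open>Coefficient of x^j in the formal series <alpha, Y^o(v,x) w>, where
  Y^o(v,x) = Y_W(e^{x L(1)} (-x^(-2))^{L(0)} v, x^(-1)) and L(1) = omega_2.
  For v in V_(n): sum over k of (-1)^n/k! x^(k-2n) Y_W(L(1)^k v, x^(-1)).\<close>
definition Yo_coeff :: "(complex \<Rightarrow> 'v::ab_group_add \<Rightarrow> 'v) \<Rightarrow> ('v \<Rightarrow> int \<Rightarrow> 'v \<Rightarrow> 'v) \<Rightarrow> 'v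
    \<Rightarrow> ('v \<Rightarrow> int \<Rightarrow> 'w \<Rightarrow> 'w) \<Rightarrow> ('w \<Rightarrow> complex) \<Rightarrow> 'v \<Rightarrow> 'w \<Rightarrow> int \<Rightarrow> complex" where
  "Yo_coeff sV Y \<omega> YW \<alpha> v w j = (let c = gcomps (Vgr sV Y \<omega>) v; L1 = Y \<omega> 2 in
      \<Sum>n\<in>{n. c n \<noteq> 0}. \<Sum>k\<in>{k::nat. (L1 ^^ k) (c n) \<noteq> 0}.
        ((-1) powi n / of_nat (fact k)) * \<alpha> (YW ((L1 ^^ k) (c n)) (j - int k + 2 * n - 1) w))"

definition conv_out :: "(int \<Rightarrow> complex) \<Rightarrow> complex \<Rightarrow> (complex \<Rightarrow> complex) \<Rightarrow> bool" where
  "conv_out c z' f \<longleftrightarrow> (\<forall>x. cmod x > cmod z' \<longrightarrow>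
      (\<lambda>j. norm (c j * x powi j)) summable_on UNIV \<and> ((\<lambda>j. c j * x powi j) has_sum f x) UNIV)"

text \<open>f is (on C - {0,z'}) an element of C[x,x^-1,(x-z')^-1] with pole order at most a at 0
  and at most b at z'.\<close>
definition ratP :: "complex \<Rightarrow> (complex \<Rightarrow> complex) \<Rightarrow> nat \<Rightarrow> nat \<Rightarrow> bool" where
  "ratP z' f a b \<longleftrightarrow> (\<exists>q. \<forall>x. x \<noteq> 0 \<and> x \<noteq> z' \<longrightarrow> f x = poly q x / (x ^ a * (x - z') ^ b))"

definition DP :: "(complex \<Rightarrow> 'v::ab_group_add \<Rightarrow> 'v) \<Rightarrow> ('v \<Rightarrow> int \<Rightarrow> 'v \<Rightarrow> 'v) \<Rightarrow> 'v
    \<Rightarrow> (complex \<Rightarrow> 'w::ab_group_add \<Rightarrow> 'w) \<Rightarrow> ('v \<Rightarrow> int \<Rightarrow> 'w \<Rightarrow> 'w) \<Rightarrow> complex \<Rightarrow> ('w \<Rightarrow> complex) set" where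
  "DP sV Y \<omega> sW YW z' = {\<alpha> \<in> dual sW. \<forall>v. \<exists>a b. \<forall>w. \<exists>f.
      conv_out (Yo_coeff sV Y \<omega> YW \<alpha> v w) z' f \<and> ratP z' f a b}"

definition laurent0 :: "real \<Rightarrow> (complex \<Rightarrow> complex) \<Rightarrow> (int \<Rightarrow> complex) \<Rightarrow> bool" where
  "laurent0 r g c \<longleftrightarrow> (\<exists>N. \<forall>j<N. c j = 0) \<and>
     (\<forall>x. 0 < cmod x \<and> cmod x < r \<longrightarrow> ((\<lambda>j. c j * x powi j) has_sum g x) UNIV)"

text \<open>Coefficient of x^j of Y^R_{P(z')}(v,x) alpha, as an element of W*.\<close>
definition YR :: "(complex \<Rightarrow> 'v::ab_group_add \<Rightarrow> 'v) \<Rightarrow> ('v \<Rightarrow> int \<Rightarrow> 'v \<Rightarrow> 'v) \<Rightarrow> 'v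
    \<Rightarrow> ('v \<Rightarrow> int \<Rightarrow> 'w \<Rightarrow> 'w) \<Rightarrow> complex \<Rightarrow> 'v \<Rightarrow> ('w \<Rightarrow> complex) \<Rightarrow> int \<Rightarrow> 'w \<Rightarrow> complex" where
  "YR sV Y \<omega> YW z' v \<alpha> j w = (THE c. \<exists>f. conv_out (Yo_coeff sV Y \<omega> YW \<alpha> v w) z' f \<and>
      (\<exists>a b. ratP z' f a b) \<and> laurent0 (cmod z') f c) j"

text \<open>Coefficient of x^j of Y^L_{P(z')}(v,x) alpha: expansion at 0 of f(x + z').\<close>
definition YL :: "(complex \<Rightarrow> 'v::ab_group_add \<Rightarrow> 'v) \<Rightarrow> ('v \<Rightarrow> int \<Rightarrow> 'v \<Rightarrow> 'v) \<Rightarrow> 'v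
    \<Rightarrow> ('v \<Rightarrow> int \<Rightarrow> 'w \<Rightarrow> 'w) \<Rightarrow> complex \<Rightarrow> 'v \<Rightarrow> ('w \<Rightarrow> complex) \<Rightarrow> int \<Rightarrow> 'w \<Rightarrow> complex" where
  "YL sV Y \<omega> YW z' v \<alpha> j w = (THE c. \<exists>f. conv_out (Yo_coeff sV Y \<omega> YW \<alpha> v w) z' f \<and>
      (\<exists>a b. ratP z' f a b) \<and> laurent0 (cmod z') (\<lambda>x. f (x + z')) c) j"

end

theory Submission
  imports Defs "HOL-Complex_Analysis.Complex_Analysis"
begin

text \<open>Write T = e^(l L(0)) on W with e^l = z, so that e^(l L*(0)) alpha = alpha o T for
  alpha in W*. A mode v_m of a vector v of weight k shifts L(0)-weights by k - m - 1 (a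
  consequence of the Jacobi identity, through the L(-1)-derivative property and the commutator
  with L(0)), and L(1) lowers weights by one; hence T v_m = z^(k-m-1) v_m T, and a bookkeeping of
  exponents gives <alpha o T, Y^o(z^L(0) v, x) w> = <alpha, Y^o(v, x/z) T w>. The substitution
  x -> x/z carries rational functions in C[x, x^-1, (x - z1)^-1] to C[x, x^-1, (x - z z1)^-1] with
  the same pole orders, carries |x| > |z1| to |x| > |z z1|, and divides the j-th coefficient of
  the expansions at 0 and at the second pole by z^j. The inverse map e^(-l L*(0)) gives
  surjectivity.\<close>

lemmas linear_map_zero = module_hom.zero[OF module_hom_linearI]
  and linear_map_add = module_hom.add[OF module_hom_linearI]
  and linear_map_diff = module_hom.diff[OF module_hom_linearI]
  and linear_map_scale = module_hom.scale[OF module_hom_linearI]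
  and linear_map_sum = module_hom.sum[OF module_hom_linearI]

section \<open>Eigenspace decompositions\<close>

locale eigenspace_decomposition = vs: vector_space s
  for s :: "'a::field \<Rightarrow> 'w::ab_group_add \<Rightarrow> 'w" +
  fixes T :: "'w \<Rightarrow> 'w" and \<phi> :: "'i \<Rightarrow> 'a" and E :: "'i \<Rightarrow> 'w set"
  assumes linear_T: "Vector_Spaces.linear s s T" and inj_\<phi>: "inj \<phi>"
    and eigenspace_eq: "E h = {w. T w = s (\<phi> h) w}" and dirsum: "is_dirsum E"
begin

lemma eigenspace_zero: "0 \<in> E h"
  by (simp add: eigenspace_eq linear_map_zero[OF linear_T])

lemma eigenspace_add: "x \<in> E h \<Longrightarrow> y \<in> E h \<Longrightarrow> x + y \<in> E h"
  by (simp add: eigenspace_eq linear_map_add[OF linear_T] vs.scale_right_distrib)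

lemma eigenspace_scale: "x \<in> E h \<Longrightarrow> s c x \<in> E h"
  by (simp add: eigenspace_eq linear_map_scale[OF linear_T] mult.commute)

lemma eigenspace_diff: "x \<in> E h \<Longrightarrow> y \<in> E h \<Longrightarrow> x - y \<in> E h"
  by (simp add: eigenspace_eq linear_map_diff[OF linear_T] vs.scale_right_diff_distrib)

lemma eigenvectors_independent:
  assumes "finite S" "\<forall>h\<in>S. g h \<in> E h" "sum g S = 0"
  shows "\<forall>h\<in>S. g h = 0"
  using assms
proof (induction S arbitrary: g rule: finite_induct)
  case empty
  then show ?case by simp
next
  case (insert \<mu> S)
  \<comment> \<open>Applying T - \<phi> \<mu> kills g \<mu> and rescales every other g h by \<phi> h - \<phi> \<mu> \<noteq> 0.\<close>
  have sum_\<mu>: "g \<mu> + sum g S = 0"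
    using insert by simp
  have "s (\<phi> \<mu>) (g \<mu>) + (\<Sum>h\<in>S. s (\<phi> h) (g h)) = T (g \<mu> + sum g S)"
    using insert.prems(1) by (simp add: linear_map_add[OF linear_T] linear_map_sum[OF linear_T] eigenspace_eq)
  also have "\<dots> = s (\<phi> \<mu>) (g \<mu>) + (\<Sum>h\<in>S. s (\<phi> \<mu>) (g h))"
    using sum_\<mu> by (metis linear_map_zero[OF linear_T]
        vs.scale_right_distrib vs.scale_sum_right vs.scale_zero_right)
  finally have "(\<Sum>h\<in>S. s (\<phi> h - \<phi> \<mu>) (g h)) = 0"
    by (simp add: vs.scale_left_diff_distrib sum_subtractf)
  moreover have "\<forall>h\<in>S. s (\<phi> h - \<phi> \<mu>) (g h) \<in> E h"
    using insert.prems(1) eigenspace_scale by blast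
  ultimately have "\<forall>h\<in>S. s (\<phi> h - \<phi> \<mu>) (g h) = 0"
    by (rule insert.IH[rotated])
  moreover have "\<forall>h\<in>S. \<phi> h \<noteq> \<phi> \<mu>"
    using insert.hyps(2) inj_\<phi> by (metis injD)
  ultimately have "\<forall>h\<in>S. g h = 0"
    by simp
  with sum_\<mu> show ?case
    by simp
qed

lemma eigenvector_sums_eq:
  assumes "finite U" "\<forall>h\<in>U. f h \<in> E h" "\<forall>h\<in>U. g h \<in> E h" "sum f U = sum g U"
  shows "\<forall>h\<in>U. f h = g h"
proof -
  have "\<forall>h\<in>U. f h - g h \<in> E h"
    using assms(2,3) eigenspace_diff by blast
  moreover have "sum (\<lambda>h. f h - g h) U = 0"
    using assms(4) by (simp add: sum_subtractf)
  ultimately have "\<forall>h\<in>U. f h - g h = 0"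
    by (rule eigenvectors_independent[OF assms(1)])
  then show ?thesis
    by simp
qed

lemma gcomps_unique:
  assumes S: "finite S" and g: "\<forall>h\<in>S. g h \<in> E h" and w: "w = sum g S"
  shows "gcomps E w = (\<lambda>h. if h \<in> S then g h else 0)"
  unfolding gcomps_def
proof (rule the_equality)
  let ?g = "\<lambda>h. if h \<in> S then g h else 0"
  have supp: "{h. ?g h \<noteq> 0} \<subseteq> S"
    by auto
  show "finite {h. ?g h \<noteq> 0} \<and> (\<forall>h. ?g h \<in> E h) \<and> w = sum ?g {h. ?g h \<noteq> 0}"
  proof (intro conjI allI)
    show "finite {h. ?g h \<noteq> 0}"
      using finite_subset[OF supp S] .
    show "?g h \<in> E h" for h
      using g eigenspace_zero by auto
    have "sum ?g {h. ?g h \<noteq> 0} = sum ?g S"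
      by (rule sum.mono_neutral_left[OF S supp]) auto
    then show "w = sum ?g {h. ?g h \<noteq> 0}"
      using w by simp
  qed
  fix f assume f: "finite {h. f h \<noteq> 0} \<and> (\<forall>h. f h \<in> E h) \<and> w = sum f {h. f h \<noteq> 0}"
  let ?U = "S \<union> {h. f h \<noteq> 0}"
  have U: "finite ?U"
    using f S by simp
  have "sum f ?U = sum f {h. f h \<noteq> 0}"
    by (rule sum.mono_neutral_right[OF U]) auto
  moreover have "sum ?g ?U = sum g S"
    by (subst sum.mono_neutral_right[OF U, of S]) auto
  ultimately have "sum f ?U = sum ?g ?U"
    using f w by simp
  moreover have "?g h \<in> E h" for h
    using g eigenspace_zero by simp
  ultimately have eq: "\<forall>h\<in>?U. f h = ?g h"
    using f by (intro eigenvector_sums_eq[OF U]) auto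
  show "f = ?g"
  proof
    fix h
    show "f h = ?g h"
      by (cases "h \<in> ?U") (use eq in blast, simp)
  qed
qed

lemma gcomps_finite: "finite {h. gcomps E w h \<noteq> 0}"
  and gcomps_in_eigenspace: "gcomps E w h \<in> E h"
  and sum_gcomps: "sum (gcomps E w) {h. gcomps E w h \<noteq> 0} = w"
proof -
  obtain S g where S: "finite S" "\<forall>h\<in>S. g h \<in> E h" "w = sum g S"
    using dirsum unfolding is_dirsum_def by blast
  note gc = gcomps_unique[OF S]
  have supp: "{h. gcomps E w h \<noteq> 0} \<subseteq> S"
    using gc by auto
  show "finite {h. gcomps E w h \<noteq> 0}"
    using finite_subset[OF supp S(1)] .
  show "gcomps E w h \<in> E h"
    using gc S eigenspace_zero by auto
  have "sum (gcomps E w) {h. gcomps E w h \<noteq> 0} = sum (gcomps E w) S"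
    by (rule sum.mono_neutral_left[OF S(1) supp]) auto
  also have "\<dots> = w"
    by (simp add: gc S(3)[symmetric])
  finally show "sum (gcomps E w) {h. gcomps E w h \<noteq> 0} = w" .
qed

lemma sum_gcomps_superset:
  assumes "finite S" "{h. gcomps E w h \<noteq> 0} \<subseteq> S"
  shows "sum (gcomps E w) S = w"
proof -
  have "sum (gcomps E w) S = sum (gcomps E w) {h. gcomps E w h \<noteq> 0}"
    by (rule sum.mono_neutral_right[OF assms]) auto
  then show ?thesis
    using sum_gcomps by simp
qed

lemma gcomps_common_support:
  obtains S where "finite S" "sum (gcomps E x) S = x" "sum (gcomps E y) S = y"
proof
  let ?S = "{h. gcomps E x h \<noteq> 0} \<union> {h. gcomps E y h \<noteq> 0}"
  show "finite ?S"
    using gcomps_finite by simp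
  then show "sum (gcomps E x) ?S = x" "sum (gcomps E y) ?S = y"
    by (auto intro: sum_gcomps_superset)
qed

definition diag :: "('i \<Rightarrow> 'a) \<Rightarrow> 'w \<Rightarrow> 'w" where
  "diag k w = (let c = gcomps E w in \<Sum>h\<in>{h. c h \<noteq> 0}. s (k h) (c h))"

lemma diag_eq_sum:
  assumes "finite S" "\<forall>h\<in>S. g h \<in> E h" "w = sum g S"
  shows "diag k w = (\<Sum>h\<in>S. s (k h) (g h))"
proof -
  note gc = gcomps_unique[OF assms]
  have supp: "{h. gcomps E w h \<noteq> 0} \<subseteq> S"
    using gc by auto
  have "diag k w = (\<Sum>h\<in>S. s (k h) (gcomps E w h))"
    unfolding diag_def Let_def by (rule sum.mono_neutral_left[OF assms(1) supp]) auto
  then show ?thesis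
    by (simp add: gc)
qed

lemma diag_eq_sum_gcomps:
  "finite S \<Longrightarrow> sum (gcomps E w) S = w \<Longrightarrow> diag k w = (\<Sum>h\<in>S. s (k h) (gcomps E w h))"
  by (rule diag_eq_sum) (auto simp: gcomps_in_eigenspace)

lemma diag_eigenvector: "x \<in> E \<mu> \<Longrightarrow> diag k x = s (k \<mu>) x"
  using diag_eq_sum[of "{\<mu>}" "\<lambda>_. x" x k] by simp

lemma linear_diag: "Vector_Spaces.linear s s (diag k)"
  unfolding Vector_Spaces.linear_iff
proof (intro conjI allI)
  fix x y
  obtain S where S: "finite S" "sum (gcomps E x) S = x" "sum (gcomps E y) S = y"
    by (rule gcomps_common_support)
  have "diag k (x + y) = (\<Sum>h\<in>S. s (k h) (gcomps E x h + gcomps E y h))"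
    using S by (intro diag_eq_sum) (auto simp: gcomps_in_eigenspace eigenspace_add sum.distrib)
  then show "diag k (x + y) = diag k x + diag k y"
    by (simp add: diag_eq_sum_gcomps[OF S(1,2)] diag_eq_sum_gcomps[OF S(1,3)]
        vs.scale_right_distrib sum.distrib)
next
  fix c x
  obtain S where S: "finite S" "sum (gcomps E x) S = x"
    using gcomps_finite sum_gcomps by blast
  have "s c x = (\<Sum>h\<in>S. s c (gcomps E x h))"
    using S(2) vs.scale_sum_right by metis
  then have "diag k (s c x) = (\<Sum>h\<in>S. s (k h) (s c (gcomps E x h)))"
    using S by (intro diag_eq_sum) (auto simp: gcomps_in_eigenspace eigenspace_scale)
  then show "diag k (s c x) = s c (diag k x)"
    by (simp add: diag_eq_sum_gcomps[OF S] vs.scale_sum_right mult.commute)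
qed (rule vs.vector_space_axioms)+

lemma diag_diag: "diag k1 (diag k2 w) = diag (\<lambda>h. k1 h * k2 h) w"
proof -
  have diag2: "diag k2 w = (\<Sum>h\<in>{h. gcomps E w h \<noteq> 0}. s (k2 h) (gcomps E w h))"
    by (simp add: diag_def Let_def)
  have "diag k1 (diag k2 w) = (\<Sum>h\<in>{h. gcomps E w h \<noteq> 0}. s (k1 h) (s (k2 h) (gcomps E w h)))"
    by (rule diag_eq_sum[OF gcomps_finite _ diag2]) (simp add: gcomps_in_eigenspace eigenspace_scale)
  then show ?thesis
    by (simp add: diag_def Let_def)
qed

lemma diag_one: "diag (\<lambda>_. 1) w = w"
  by (simp add: diag_def Let_def sum_gcomps)

lemma gcomps_diag: "gcomps E (diag k w) h = s (k h) (gcomps E w h)"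
proof -
  let ?S = "{h. gcomps E w h \<noteq> 0}"
  have diag_w: "diag k w = (\<Sum>h\<in>?S. s (k h) (gcomps E w h))"
    by (rule diag_eq_sum_gcomps[OF gcomps_finite sum_gcomps])
  have "gcomps E (diag k w) = (\<lambda>h. if h \<in> ?S then s (k h) (gcomps E w h) else 0)"
    by (rule gcomps_unique[OF gcomps_finite _ diag_w]) (simp add: gcomps_in_eigenspace eigenspace_scale)
  then show ?thesis
    by simp
qed

end

section \<open>Laurent expansions and rational functions\<close>

lemma has_sum_int_iff_has_sum_nat_from:
  assumes "\<forall>j<N. c j = 0"
  shows "(c has_sum s) UNIV \<longleftrightarrow> ((\<lambda>n. c (N + int n)) has_sum s) UNIV"
proof -
  have range_eq: "range (\<lambda>n::nat. N + int n) = {N..}"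
    by (auto simp: image_iff intro!: exI[of _ "nat (j - N)" for j])
  have "(c has_sum s) UNIV \<longleftrightarrow> (c has_sum s) (range (\<lambda>n::nat. N + int n))"
    by (rule has_sum_cong_neutral) (use assms in \<open>auto simp: range_eq\<close>)
  also have "\<dots> \<longleftrightarrow> ((\<lambda>n. c (N + int n)) has_sum s) UNIV"
    by (subst has_sum_reindex) (auto simp: inj_on_def comp_def)
  finally show ?thesis .
qed

lemma power_series_vanishing_on_punctured_disc:
  fixes a :: "nat \<Rightarrow> complex"
  assumes r: "0 < r" and sums0: "\<And>x. 0 < cmod x \<Longrightarrow> cmod x < r \<Longrightarrow> (\<lambda>n. a n * x ^ n) sums 0"
  shows "a k = 0"
proof (rule ccontr)
  assume ak: "a k \<noteq> 0"
  \<comment> \<open>Multiplying by x gives a series vanishing on the whole disc, including its centre.\<close>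
  define b where "b n = (case n of 0 \<Rightarrow> 0 | Suc m \<Rightarrow> a m)" for n
  have b_sums: "(\<lambda>n. b n * (x - 0) ^ n) sums 0" if "norm (x - 0) < r" for x
  proof (cases "x = 0")
    case True
    then have "(\<lambda>n. b n * (x - 0) ^ n) = (\<lambda>_. 0)"
      by (auto simp: b_def split: nat.split)
    then show ?thesis
      by (simp add: sums_0)
  next
    case False
    have "(\<lambda>n. x * (a n * x ^ n)) sums (x * 0)"
      using sums0[of x] False that by (intro sums_mult) auto
    then have "(\<lambda>n. b (Suc n) * x ^ Suc n) sums 0"
      by (simp add: b_def algebra_simps)
    then show ?thesis
      using sums_Suc_iff[of "\<lambda>n. b n * x ^ n" 0] by (simp add: b_def)
  qed
  show False
  proof (rule powser_0_nonzero[where a=b and \<xi>=0 and f="\<lambda>_. 0" and m="Suc k", OF r b_sums])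
    fix s :: real
    assume "0 < s" and nonzero: "\<And>x::complex. x \<in> cball 0 s - {0} \<Longrightarrow> (0::complex) \<noteq> 0"
    show False
      using nonzero[of "complex_of_real s"] \<open>0 < s\<close> by simp
  qed (simp_all add: b_def ak)
qed

lemma laurent0_cong:
  "laurent0 r g c \<Longrightarrow> (\<And>x. 0 < cmod x \<Longrightarrow> cmod x < r \<Longrightarrow> g x = g' x) \<Longrightarrow> laurent0 r g' c"
  unfolding laurent0_def by auto

lemma laurent0_lincomb:
  assumes "laurent0 r g1 c1" and "laurent0 r g2 c2"
  shows "laurent0 r (\<lambda>x. a * g1 x + g2 x) (\<lambda>j. a * c1 j + c2 j)"
proof -
  obtain N1 N2 where N: "\<forall>j<N1. c1 j = 0" "\<forall>j<N2. c2 j = 0"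
    using assms unfolding laurent0_def by blast
  show ?thesis
    unfolding laurent0_def
  proof (intro conjI allI impI exI[of _ "min N1 N2"])
    fix j :: int assume "j < min N1 N2"
    then show "a * c1 j + c2 j = 0"
      using N by simp
  next
    fix x :: complex assume x: "0 < cmod x \<and> cmod x < r"
    have "((\<lambda>j. a * (c1 j * x powi j) + c2 j * x powi j) has_sum (a * g1 x + g2 x)) UNIV"
      using assms x unfolding laurent0_def by (intro has_sum_add has_sum_cmult_right) auto
    then show "((\<lambda>j. (a * c1 j + c2 j) * x powi j) has_sum (a * g1 x + g2 x)) UNIV"
      by (simp add: algebra_simps)
  qed
qed

lemma laurent0_rescale:
  assumes "laurent0 r g c" and z: "z \<noteq> 0"
  shows "laurent0 (cmod z * r) (\<lambda>x. g (x / z)) (\<lambda>j. c j / z powi j)"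
  unfolding laurent0_def
proof (intro conjI allI impI)
  show "\<exists>N. \<forall>j<N. c j / z powi j = 0"
    using assms unfolding laurent0_def by auto
  fix x :: complex assume "0 < cmod x \<and> cmod x < cmod z * r"
  then have "0 < cmod (x / z) \<and> cmod (x / z) < r"
    using z by (simp add: norm_divide field_simps)
  then have "((\<lambda>j. c j * (x / z) powi j) has_sum g (x / z)) UNIV"
    using assms unfolding laurent0_def by blast
  moreover have "(\<lambda>j. c j * (x / z) powi j) = (\<lambda>j. c j / z powi j * x powi j)"
    by (simp add: power_int_divide_distrib)
  ultimately show "((\<lambda>j. c j / z powi j * x powi j) has_sum g (x / z)) UNIV"
    by simp
qed

lemma laurent0_zero_coeffs:
  assumes r: "0 < r" and L: "laurent0 r (\<lambda>_. 0) c"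
  shows "c = (\<lambda>_. 0)"
proof
  fix j
  obtain N where N: "\<forall>j<N. c j = 0"
    using L unfolding laurent0_def by blast
  have "(\<lambda>n. c (N + int n) * x ^ n) sums 0" if x: "0 < cmod x" "cmod x < r" for x
  proof -
    have "((\<lambda>j. c j * x powi j) has_sum 0) UNIV"
      using L x unfolding laurent0_def by auto
    moreover have "\<forall>j<N. c j * x powi j = 0"
      using N by simp
    ultimately have "((\<lambda>n. c (N + int n) * x powi (N + int n)) has_sum 0) UNIV"
      using has_sum_int_iff_has_sum_nat_from[of N "\<lambda>j. c j * x powi j" 0] by blast
    from has_sum_cmult_right[OF this, of "x powi (- N)"]
    have "((\<lambda>n. c (N + int n) * x ^ n) has_sum 0) UNIV"
      using x by (simp add: power_int_add power_int_minus field_simps)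
    then show ?thesis
      by (rule has_sum_imp_sums)
  qed
  then have zero: "c (N + int n) = 0" for n
    by (rule power_series_vanishing_on_punctured_disc[OF r])
  show "c j = 0"
  proof (cases "j < N")
    case False
    then have "j = N + int (nat (j - N))"
      by simp
    then show ?thesis
      using zero by metis
  qed (use N in auto)
qed

lemma laurent0_unique:
  assumes "0 < r" and L1: "laurent0 r g1 c1" and L2: "laurent0 r g2 c2"
    and eq: "\<And>x. 0 < cmod x \<Longrightarrow> cmod x < r \<Longrightarrow> g1 x = g2 x"
  shows "c1 = c2"
proof -
  have "laurent0 r (\<lambda>_. 0) (\<lambda>j. - 1 * c1 j + c2 j)"
    using laurent0_lincomb[OF L1 L2, of "- 1"] by (rule laurent0_cong) (simp add: eq)
  from laurent0_zero_coeffs[OF \<open>0 < r\<close> this]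
  show ?thesis
    by (auto simp: fun_eq_iff)
qed

lemma laurent0_holomorphic_div_power:
  assumes r: "0 < r" and hol: "g holomorphic_on ball 0 r"
  obtains c where "laurent0 r (\<lambda>x. g x / x ^ e) c"
proof
  define b where "b n = (deriv ^^ n) g 0 / fact n" for n
  define c where "c j = (if j \<ge> - int e then b (nat (j + int e)) else 0)" for j
  have b_has_sum: "((\<lambda>n. b n * x ^ n) has_sum g x) UNIV" if x: "cmod x < r" for x
  proof -
    have sums: "(\<lambda>n. b n * y ^ n) sums g y" if "cmod y < r" for y
      using holomorphic_power_series[OF hol, of y] that by (simp add: b_def)
    \<comment> \<open>Absolute convergence at x follows from convergence at a point of larger modulus.\<close>
    define t where "t = (cmod x + r) / 2"
    have t: "cmod x < t \<and> t < r"
      unfolding t_def using x by auto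
    moreover have "0 < t"
      using t norm_ge_zero[of x] by linarith
    ultimately have "cmod (complex_of_real t) < r" "cmod x < cmod (complex_of_real t)"
      by simp_all
    then have "summable (\<lambda>n. norm (b n * x ^ n))"
      using powser_insidea[OF sums_summable[OF sums]] by blast
    then show ?thesis
      using sums[OF x] by (rule norm_summable_imp_has_sum)
  qed
  show "laurent0 r (\<lambda>x. g x / x ^ e) c"
    unfolding laurent0_def
  proof (intro conjI allI impI exI[of _ "- int e"])
    fix j :: int assume "j < - int e"
    then show "c j = 0"
      by (simp add: c_def)
  next
    fix x :: complex assume x: "0 < cmod x \<and> cmod x < r"
    have "((\<lambda>n. inverse (x ^ e) * (b n * x ^ n)) has_sum (inverse (x ^ e) * g x)) UNIV"
      using x by (intro has_sum_cmult_right b_has_sum) auto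
    moreover have "inverse (x ^ e) * (b n * x ^ n) = c (- int e + int n) * x powi (- int e + int n)" for n
      using x by (simp add: c_def power_int_diff field_simps)
    ultimately show "((\<lambda>j. c j * x powi j) has_sum (g x / x ^ e)) UNIV"
      by (subst has_sum_int_iff_has_sum_nat_from[of "- int e"]) (auto simp: c_def field_simps)
  qed
qed

lemma ratP_agree_off_poles:
  assumes f: "ratP z' f a b" and g: "ratP z' g a' b'"
    and eq: "\<And>x. R < cmod x \<Longrightarrow> f x = g x" and x: "x \<noteq> 0" "x \<noteq> z'"
  shows "f x = g x"
proof -
  obtain q q' where
    q: "\<forall>x. x \<noteq> 0 \<and> x \<noteq> z' \<longrightarrow> f x = poly q x / (x ^ a * (x - z') ^ b)" and
    q': "\<forall>x. x \<noteq> 0 \<and> x \<noteq> z' \<longrightarrow> g x = poly q' x / (x ^ a' * (x - z') ^ b')"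
    using f g unfolding ratP_def by blast
  \<comment> \<open>Clearing denominators, f = g becomes the vanishing of a polynomial P.\<close>
  define P where "P = q * [:0, 1:] ^ a' * [:- z', 1:] ^ b' - q' * [:0, 1:] ^ a * [:- z', 1:] ^ b"
  have P_root_iff: "poly P y = 0 \<longleftrightarrow> f y = g y" if "y \<noteq> 0" "y \<noteq> z'" for y
    using q q' that by (simp add: P_def frac_eq_eq algebra_simps)
  have "P = 0"
  proof (rule ccontr)
    assume "P \<noteq> 0"
    define M where "M = \<bar>R\<bar> + cmod z' + 1"
    have M: "R < M" "cmod z' < M" "0 < M"
      unfolding M_def using abs_ge_self[of R] norm_ge_zero[of z'] by linarith+
    have "range (\<lambda>n::nat. complex_of_real (M + real n)) \<subseteq> {y. poly P y = 0}"
    proof clarify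
      fix n :: nat
      let ?y = "complex_of_real (M + real n)"
      have "cmod ?y = M + real n"
        using M by (simp only: norm_of_real)
      then have "?y \<noteq> 0" "?y \<noteq> z'" "R < cmod ?y"
        using M by auto
      then show "poly P ?y = 0"
        using P_root_iff eq by blast
    qed
    moreover have "infinite (range (\<lambda>n::nat. complex_of_real (M + real n)))"
      by (rule range_inj_infinite) (auto simp: inj_def)
    ultimately show False
      using poly_roots_finite[OF \<open>P \<noteq> 0\<close>] finite_subset by blast
  qed
  then show ?thesis
    using P_root_iff[OF x] by simp
qed

lemma ratP_mono:
  assumes "ratP z' f a b" "a \<le> A" "b \<le> B"
  shows "ratP z' f A B"
proof -
  obtain q where q: "\<forall>x. x \<noteq> 0 \<and> x \<noteq> z' \<longrightarrow> f x = poly q x / (x ^ a * (x - z') ^ b)"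
    using assms unfolding ratP_def by blast
  have "f x = poly (q * [:0, 1:] ^ (A - a) * [:- z', 1:] ^ (B - b)) x / (x ^ A * (x - z') ^ B)"
    if "x \<noteq> 0" "x \<noteq> z'" for x
  proof -
    have "x ^ A * (x - z') ^ B = (x ^ a * (x - z') ^ b) * (x ^ (A - a) * (x - z') ^ (B - b))"
      using assms(2,3) by (simp add: power_add[symmetric] algebra_simps)
    then show ?thesis
      using q that by (simp add: algebra_simps)
  qed
  then show ?thesis
    unfolding ratP_def by blast
qed

lemma ratP_lincomb:
  assumes "ratP z' f a b" "ratP z' g a b"
  shows "ratP z' (\<lambda>x. c * f x + g x) a b"
proof -
  obtain q q' where
    q: "\<forall>x. x \<noteq> 0 \<and> x \<noteq> z' \<longrightarrow> f x = poly q x / (x ^ a * (x - z') ^ b)" and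
    q': "\<forall>x. x \<noteq> 0 \<and> x \<noteq> z' \<longrightarrow> g x = poly q' x / (x ^ a * (x - z') ^ b)"
    using assms unfolding ratP_def by blast
  have "c * f x + g x = poly (smult c q + q') x / (x ^ a * (x - z') ^ b)" if "x \<noteq> 0" "x \<noteq> z'" for x
    using q q' that by (simp add: add_divide_distrib)
  then show ?thesis
    unfolding ratP_def by blast
qed

lemma ratP_rescale:
  assumes "ratP z1 f a b" and z: "z \<noteq> 0"
  shows "ratP (z * z1) (\<lambda>x. f (x / z)) a b"
proof -
  obtain q where q: "\<forall>x. x \<noteq> 0 \<and> x \<noteq> z1 \<longrightarrow> f x = poly q x / (x ^ a * (x - z1) ^ b)"
    using assms unfolding ratP_def by blast
  have "f (x / z) = poly (smult (z ^ (a + b)) (pcompose q [:0, inverse z:])) x / (x ^ a * (x - z * z1) ^ b)"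
    if x: "x \<noteq> 0" "x \<noteq> z * z1" for x
  proof -
    have "x / z \<noteq> 0" "x / z \<noteq> z1"
      using x z by (auto simp: field_simps)
    then have "f (x / z) = poly q (x / z) / ((x / z) ^ a * (x / z - z1) ^ b)"
      using q by blast
    also have "x / z - z1 = (x - z * z1) / z"
      using z by (simp add: field_simps)
    also have "poly q (x / z) / ((x / z) ^ a * ((x - z * z1) / z) ^ b)
        = z ^ (a + b) * poly q (x / z) / (x ^ a * (x - z * z1) ^ b)"
      using z by (simp add: power_divide power_add)
    also have "z ^ (a + b) * poly q (x / z) = poly (smult (z ^ (a + b)) (pcompose q [:0, inverse z:])) x"
      by (simp add: poly_pcompose divide_inverse mult.commute)
    finally show ?thesis .
  qed
  then show ?thesis
    unfolding ratP_def by blast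
qed

lemma conv_out_unique: "conv_out c z' f \<Longrightarrow> conv_out c z' g \<Longrightarrow> cmod z' < cmod x \<Longrightarrow> f x = g x"
  unfolding conv_out_def by (meson has_sum_unique)

lemma conv_out_lincomb_eq:
  assumes "conv_out c1 z' f1" "conv_out c2 z' f2" "conv_out (\<lambda>j. a * c1 j + c2 j) z' f"
    and x: "cmod z' < cmod x"
  shows "f x = a * f1 x + f2 x"
proof -
  have "((\<lambda>j. a * (c1 j * x powi j) + c2 j * x powi j) has_sum (a * f1 x + f2 x)) UNIV"
    using assms unfolding conv_out_def by (intro has_sum_add has_sum_cmult_right) auto
  moreover have "((\<lambda>j. (a * c1 j + c2 j) * x powi j) has_sum f x) UNIV"
    using assms unfolding conv_out_def by blast
  ultimately show ?thesis
    by (simp add: algebra_simps has_sum_unique)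
qed

lemma conv_out_rescale:
  assumes "conv_out c z1 f" and z: "z \<noteq> 0"
  shows "conv_out (\<lambda>j. c j / z powi j) (z * z1) (\<lambda>x. f (x / z))"
  unfolding conv_out_def
proof (intro allI impI)
  fix x assume "cmod (z * z1) < cmod x"
  then have "cmod z1 < cmod (x / z)"
    using z by (simp add: norm_mult norm_divide field_simps)
  then have "(\<lambda>j. norm (c j * (x / z) powi j)) summable_on UNIV \<and>
      ((\<lambda>j. c j * (x / z) powi j) has_sum f (x / z)) UNIV"
    using assms unfolding conv_out_def by blast
  moreover have "c j / z powi j * x powi j = c j * (x / z) powi j" for j
    by (simp add: power_int_divide_distrib)
  ultimately show "(\<lambda>j. norm (c j / z powi j * x powi j)) summable_on UNIV \<and>
      ((\<lambda>j. c j / z powi j * x powi j) has_sum f (x / z)) UNIV"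
    by (simp only:)
qed

text \<open>e is the Laurent expansion at the pole s of the rational function whose expansion at
  infinity is c: Y^R and Y^L are the cases s = 0 and s = z'.\<close>

definition pole_expansion :: "complex \<Rightarrow> complex \<Rightarrow> (int \<Rightarrow> complex) \<Rightarrow> (int \<Rightarrow> complex) \<Rightarrow> bool" where
  "pole_expansion z' s c e \<longleftrightarrow>
     (\<exists>f. conv_out c z' f \<and> (\<exists>a b. ratP z' f a b) \<and> laurent0 (cmod z') (\<lambda>x. f (x + s)) e)"

lemma shift_avoids_poles:
  assumes "s \<in> {0, z'}" "0 < cmod x" "cmod x < cmod z'"
  shows "x + s \<noteq> 0" "x + s \<noteq> z'"
proof -
  have "x \<noteq> - z'"
    using assms(3) by auto
  then show "x + s \<noteq> 0" "x + s \<noteq> z'"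
    using assms by (auto simp: add_eq_0_iff)
qed

lemma pole_expansion_unique:
  assumes "z' \<noteq> 0" "s \<in> {0, z'}" "pole_expansion z' s c e1" "pole_expansion z' s c e2"
  shows "e1 = e2"
proof -
  obtain f1 a1 b1 where f1: "conv_out c z' f1" "ratP z' f1 a1 b1" "laurent0 (cmod z') (\<lambda>x. f1 (x + s)) e1"
    using assms(3) unfolding pole_expansion_def by blast
  obtain f2 a2 b2 where f2: "conv_out c z' f2" "ratP z' f2 a2 b2" "laurent0 (cmod z') (\<lambda>x. f2 (x + s)) e2"
    using assms(4) unfolding pole_expansion_def by blast
  have "f1 y = f2 y" if "y \<noteq> 0" "y \<noteq> z'" for y
    by (rule ratP_agree_off_poles[OF f1(2) f2(2) conv_out_unique[OF f1(1) f2(1)] that])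
  then show ?thesis
    using laurent0_unique[OF _ f1(3) f2(3)] shift_avoids_poles[OF assms(2)] assms(1) by simp
qed

lemma ratP_laurent0_at_0:
  assumes z': "z' \<noteq> 0" and f: "ratP z' f a b"
  obtains e where "laurent0 (cmod z') f e"
proof -
  obtain q where q: "\<forall>x. x \<noteq> 0 \<and> x \<noteq> z' \<longrightarrow> f x = poly q x / (x ^ a * (x - z') ^ b)"
    using f unfolding ratP_def by blast
  have "(\<lambda>x. poly q x / (x - z') ^ b) holomorphic_on ball 0 (cmod z')"
    by (intro holomorphic_intros) (auto simp: dist_norm)
  then obtain e where "laurent0 (cmod z') (\<lambda>x. poly q x / (x - z') ^ b / x ^ a) e"
    using laurent0_holomorphic_div_power z' by (metis zero_less_norm_iff)
  then have "laurent0 (cmod z') f e"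
  proof (rule laurent0_cong)
    fix x :: complex assume "0 < cmod x" "cmod x < cmod z'"
    then have "x \<noteq> 0" "x \<noteq> z'"
      by auto
    then show "poly q x / (x - z') ^ b / x ^ a = f x"
      using q by (simp add: field_simps)
  qed
  then show ?thesis
    by (rule that)
qed

lemma ratP_laurent0_at_pole:
  assumes z': "z' \<noteq> 0" and f: "ratP z' f a b"
  obtains e where "laurent0 (cmod z') (\<lambda>x. f (x + z')) e"
proof -
  obtain q where q: "\<forall>x. x \<noteq> 0 \<and> x \<noteq> z' \<longrightarrow> f x = poly q x / (x ^ a * (x - z') ^ b)"
    using f unfolding ratP_def by blast
  have "x + z' \<noteq> 0" if "x \<in> ball 0 (cmod z')" for x
    using that by (auto simp: add_eq_0_iff)
  then have "(\<lambda>x. poly q (x + z') / (x + z') ^ a) holomorphic_on ball 0 (cmod z')"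
    by (intro holomorphic_intros) auto
  then obtain e where "laurent0 (cmod z') (\<lambda>x. poly q (x + z') / (x + z') ^ a / x ^ b) e"
    using laurent0_holomorphic_div_power z' by (metis zero_less_norm_iff)
  then have "laurent0 (cmod z') (\<lambda>x. f (x + z')) e"
  proof (rule laurent0_cong)
    fix x :: complex assume "0 < cmod x" "cmod x < cmod z'"
    then have "x + z' \<noteq> 0" "x + z' \<noteq> z'" "x \<noteq> 0"
      using shift_avoids_poles[of z' z' x] by auto
    then have "f (x + z') = poly q (x + z') / ((x + z') ^ a * x ^ b)"
      using q by simp
    then show "poly q (x + z') / (x + z') ^ a / x ^ b = f (x + z')"
      by (simp add: field_simps)
  qed
  then show ?thesis
    by (rule that)
qed

lemma pole_expansion_exists:
  assumes z': "z' \<noteq> 0" and s: "s \<in> {0, z'}" and f: "conv_out c z' f" "ratP z' f a b"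
  obtains e where "pole_expansion z' s c e"
proof -
  have "\<exists>e. laurent0 (cmod z') (\<lambda>x. f (x + s)) e"
  proof (cases "s = 0")
    case True
    obtain e where "laurent0 (cmod z') f e"
      by (rule ratP_laurent0_at_0[OF z' f(2)])
    then show ?thesis
      using True by auto
  next
    case False
    obtain e where "laurent0 (cmod z') (\<lambda>x. f (x + z')) e"
      by (rule ratP_laurent0_at_pole[OF z' f(2)])
    then show ?thesis
      using False s by auto
  qed
  then obtain e where "laurent0 (cmod z') (\<lambda>x. f (x + s)) e" ..
  then show ?thesis
    using f that unfolding pole_expansion_def by blast
qed

lemma pole_expansion_lincomb:
  assumes z': "z' \<noteq> 0" and s: "s \<in> {0, z'}"
    and e1: "pole_expansion z' s c1 e1" and e2: "pole_expansion z' s c2 e2"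
    and f: "conv_out (\<lambda>j. a * c1 j + c2 j) z' f" "ratP z' f A B"
  shows "pole_expansion z' s (\<lambda>j. a * c1 j + c2 j) (\<lambda>j. a * e1 j + e2 j)"
proof -
  obtain f1 a1 b1 where f1: "conv_out c1 z' f1" "ratP z' f1 a1 b1" "laurent0 (cmod z') (\<lambda>x. f1 (x + s)) e1"
    using e1 unfolding pole_expansion_def by blast
  obtain f2 a2 b2 where f2: "conv_out c2 z' f2" "ratP z' f2 a2 b2" "laurent0 (cmod z') (\<lambda>x. f2 (x + s)) e2"
    using e2 unfolding pole_expansion_def by blast
  have "ratP z' f1 (max a1 a2) (max b1 b2)" "ratP z' f2 (max a1 a2) (max b1 b2)"
    by (auto intro: ratP_mono[OF f1(2)] ratP_mono[OF f2(2)])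
  then have "ratP z' (\<lambda>x. a * f1 x + f2 x) (max a1 a2) (max b1 b2)"
    by (rule ratP_lincomb)
  then have f_eq: "f y = a * f1 y + f2 y" if "y \<noteq> 0" "y \<noteq> z'" for y
    using ratP_agree_off_poles[OF f(2) _ conv_out_lincomb_eq[OF f1(1) f2(1) f(1)] that] by blast
  have "laurent0 (cmod z') (\<lambda>x. f (x + s)) (\<lambda>j. a * e1 j + e2 j)"
  proof (rule laurent0_cong[OF laurent0_lincomb[OF f1(3) f2(3)]])
    fix x :: complex assume "0 < cmod x" "cmod x < cmod z'"
    then show "a * f1 (x + s) + f2 (x + s) = f (x + s)"
      using f_eq[OF shift_avoids_poles[OF s]] by simp
  qed
  then show ?thesis
    using f unfolding pole_expansion_def by blast
qed

lemma pole_expansion_rescale: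
  assumes z: "z \<noteq> 0" and "pole_expansion z1 s c e"
  shows "pole_expansion (z * z1) (z * s) (\<lambda>j. c j / z powi j) (\<lambda>j. e j / z powi j)"
proof -
  obtain f a b where f: "conv_out c z1 f" "ratP z1 f a b" "laurent0 (cmod z1) (\<lambda>x. f (x + s)) e"
    using assms unfolding pole_expansion_def by blast
  have "laurent0 (cmod z * cmod z1) (\<lambda>x. f (x / z + s)) (\<lambda>j. e j / z powi j)"
    using laurent0_rescale[OF f(3) z] by simp
  then have "laurent0 (cmod (z * z1)) (\<lambda>x. f ((x + z * s) / z)) (\<lambda>j. e j / z powi j)"
    using z by (simp add: norm_mult add_divide_distrib)
  then show ?thesis
    unfolding pole_expansion_def using conv_out_rescale[OF f(1) z] ratP_rescale[OF f(2) z] by blast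
qed

definition pole_coeffs :: "complex \<Rightarrow> complex \<Rightarrow> (int \<Rightarrow> complex) \<Rightarrow> int \<Rightarrow> complex" where
  "pole_coeffs z' s c = (THE e. pole_expansion z' s c e)"

lemma pole_coeffs_eqI:
  "z' \<noteq> 0 \<Longrightarrow> s \<in> {0, z'} \<Longrightarrow> pole_expansion z' s c e \<Longrightarrow> pole_coeffs z' s c = e"
  unfolding pole_coeffs_def by (blast intro: pole_expansion_unique)

lemma pole_expansion_pole_coeffs:
  assumes "z' \<noteq> 0" "s \<in> {0, z'}" "conv_out c z' f" "ratP z' f a b"
  shows "pole_expansion z' s c (pole_coeffs z' s c)"
  using pole_expansion_exists[OF assms] pole_coeffs_eqI[OF assms(1,2)] by metis

section \<open>Modules for a vertex operator algebra\<close>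

lemma sum_lessThan_truncate:
  fixes m K :: nat
  shows "m \<le> K \<Longrightarrow> (\<And>i. m \<le> i \<Longrightarrow> f i = 0) \<Longrightarrow> sum f {..<K} = sum f {..<m}"
  by (rule sum.mono_neutral_right) auto

lemma exp_lp: "z \<noteq> 0 \<Longrightarrow> exp (lp p z) = z"
proof -
  assume z: "z \<noteq> 0"
  have "arg0 z = Arg2pi z"
    using z unfolding arg0_def Arg2pi_def is_Arg_def by simp
  then have "exp (logc z) = complex_of_real (cmod z) * exp (\<i> * complex_of_real (Arg2pi z))"
    using z by (simp add: logc_def exp_add exp_of_real)
  also have "\<dots> = z"
    using Arg2pi[of z] unfolding is_Arg_def by simp
  finally show ?thesis
    using exp_integer_2pi[of "real_of_int p"] by (simp add: lp_def exp_add)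
qed

text \<open>The Virasoro operator L(n) is the mode Y \<omega> (n + 1); in particular L(-1), L(0), L(1)
  are Y \<omega> 0, Y \<omega> 1, Y \<omega> 2.\<close>

locale vertex_module =
  fixes sV :: "complex \<Rightarrow> 'v::ab_group_add \<Rightarrow> 'v" and Y :: "'v \<Rightarrow> int \<Rightarrow> 'v \<Rightarrow> 'v"
    and one \<omega> :: 'v
    and sW :: "complex \<Rightarrow> 'w::ab_group_add \<Rightarrow> 'w" and YW :: "'v \<Rightarrow> int \<Rightarrow> 'w \<Rightarrow> 'w"
  assumes VOA: "is_VOA sV Y one \<omega>" and module: "is_module sV Y one \<omega> sW YW"
begin

lemma linear_YW_left: "Vector_Spaces.linear sV sW (\<lambda>v. YW v n w)"
  and linear_YW_right: "Vector_Spaces.linear sW sW (YW v n)"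
  and linear_Y_right: "Vector_Spaces.linear sV sV (Y u n)"
  using VOA module by (simp_all add: is_VOA_def is_module_def bilinear_modes_def)

lemma YW_vacuum: "YW one n w = (if n = -1 then w else 0)"
  and Y_creation: "0 \<le> n \<Longrightarrow> Y v n one = 0" "Y v (-1) one = v"
  and Y_L_minus_1: "Y (Y \<omega> 0 v) n u = sV (- of_int n) (Y v (n - 1) u)"
  using VOA module by (simp_all add: is_VOA_def is_module_def)

sublocale V: eigenspace_decomposition sV "Y \<omega> 1" of_int "Vgr sV Y \<omega>"
  using VOA unfolding is_VOA_def bilinear_modes_def
  by (intro eigenspace_decomposition.intro eigenspace_decomposition_axioms.intro) (auto simp: inj_def Vgr_def)

sublocale W: eigenspace_decomposition sW "YW \<omega> 1" "\<lambda>h. h" "Wgr sW YW \<omega>"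
  using module unfolding is_module_def bilinear_modes_def
  by (intro eigenspace_decomposition.intro eigenspace_decomposition_axioms.intro) (auto simp: Wgr_def)

lemma module_jacobi:
  obtains K where "\<And>K'. K \<le> K' \<Longrightarrow>
    (\<Sum>i<K'. sW (of_int m gchoose i) (YW (Y u (l + int i) v) (m + n - int i) w))
    = (\<Sum>i<K'. sW ((-1)^i * (of_int l gchoose i)) (YW u (l + m - int i) (YW v (n + int i) w))
          - sW ((-1)^i * (-1) powi l * (of_int l gchoose i)) (YW v (l + n - int i) (YW u (m + int i) w)))"
proof -
  obtain N1 N2 N3 where N: "\<forall>p\<ge>N1. Y u p v = 0" "\<forall>p\<ge>N2. YW v p w = 0" "\<forall>p\<ge>N3. YW u p w = 0"
    using VOA module unfolding is_VOA_def is_module_def mode_trunc_def by meson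
  have jac: "jacobi Y YW sW"
    using module by (simp add: is_module_def)
  show ?thesis
  proof (rule that[of "nat (max (N1 - l) (max (N2 - n) (N3 - m)))"],
      rule jac[unfolded jacobi_def, rule_format])
    fix K' i assume "nat (max (N1 - l) (max (N2 - n) (N3 - m))) \<le> K'" "K' \<le> i"
    then have "N1 \<le> l + int i" "N2 \<le> n + int i" "N3 \<le> m + int i"
      by linarith+
    then show "Y u (l + int i) v = 0 \<and> YW v (n + int i) w = 0 \<and> YW u (m + int i) w = 0"
      using N by blast
  qed
qed

lemma L_minus_1_vacuum: "Y \<omega> 0 v = Y v (-2) one"
  using Y_L_minus_1[of v "-1" one] Y_creation(2) by simp

lemma YW_L_minus_1: "YW (Y \<omega> 0 v) (n + 1) w = sW (- (of_int n + 1)) (YW v n w)"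
proof -
  obtain K where jac: "\<And>K'. K \<le> K' \<Longrightarrow>
    (\<Sum>i<K'. sW (of_int (n + 2) gchoose i) (YW (Y v (-2 + int i) one) (n + 2 + -1 - int i) w))
    = (\<Sum>i<K'. sW ((-1)^i * (of_int (-2) gchoose i)) (YW v (-2 + (n + 2) - int i) (YW one (-1 + int i) w))
          - sW ((-1)^i * (-1) powi (-2) * (of_int (-2) gchoose i)) (YW one (-2 + -1 - int i) (YW v (n + 2 + int i) w)))"
    by (rule module_jacobi[where m = "n + 2" and u = v and l = "-2" and v = one and n = "-1" and w = w]) blast
  let ?K = "max K 2"
  have "(\<Sum>i<?K. sW (of_int (n + 2) gchoose i) (YW (Y v (-2 + int i) one) (n + 2 + -1 - int i) w))
      = YW (Y v (-2) one) (n + 1) w + sW (of_int n + 2) (YW v n w)"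
    by (subst sum_lessThan_truncate[of 2])
      (auto simp: numeral_2_eq_2 Y_creation linear_map_zero[OF linear_YW_left] add.commute)
  moreover have "(\<Sum>i<?K. sW ((-1)^i * (of_int (-2) gchoose i)) (YW v (-2 + (n + 2) - int i) (YW one (-1 + int i) w))
          - sW ((-1)^i * (-1) powi (-2) * (of_int (-2) gchoose i)) (YW one (-2 + -1 - int i) (YW v (n + 2 + int i) w)))
      = YW v n w"
    by (subst sum_lessThan_truncate[of 1]) (auto simp: YW_vacuum linear_map_zero[OF linear_YW_right])
  ultimately have "YW (Y v (-2) one) (n + 1) w = YW v n w - sW (of_int n + 2) (YW v n w)"
    using jac[of ?K] by (simp add: eq_diff_eq)
  also have "\<dots> = sW (1 - (of_int n + 2)) (YW v n w)"
    by (simp only: W.vs.scale_left_diff_distrib W.vs.scale_one)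
  also have "\<dots> = sW (- (of_int n + 1)) (YW v n w)"
    by simp
  finally show ?thesis
    by (simp add: L_minus_1_vacuum)
qed

lemma YW_commutator_L0:
  "YW \<omega> 1 (YW v n w) - YW v n (YW \<omega> 1 w) = YW (Y \<omega> 0 v) (n + 1) w + YW (Y \<omega> 1 v) n w"
proof -
  obtain K where jac: "\<And>K'. K \<le> K' \<Longrightarrow>
    (\<Sum>i<K'. sW (of_int 1 gchoose i) (YW (Y \<omega> (0 + int i) v) (1 + n - int i) w))
    = (\<Sum>i<K'. sW ((-1)^i * (of_int 0 gchoose i)) (YW \<omega> (0 + 1 - int i) (YW v (n + int i) w))
          - sW ((-1)^i * (-1) powi 0 * (of_int 0 gchoose i)) (YW v (0 + n - int i) (YW \<omega> (1 + int i) w)))"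
    by (rule module_jacobi[where m = 1 and u = \<omega> and l = 0 and v = v and n = n and w = w]) blast
  let ?K = "max K 2"
  have "(of_int 1 gchoose i :: complex) = of_nat (1 choose i)" for i
    by (metis binomial_gbinomial of_int_1 of_nat_1)
  then have "(of_int 1 gchoose i :: complex) = 0" if "2 \<le> i" for i
    using that by simp
  then have "(\<Sum>i<?K. sW (of_int 1 gchoose i) (YW (Y \<omega> (0 + int i) v) (1 + n - int i) w))
      = YW (Y \<omega> 0 v) (n + 1) w + YW (Y \<omega> 1 v) n w"
    by (subst sum_lessThan_truncate[of 2]) (auto simp: numeral_2_eq_2 add.commute)
  moreover have "(\<Sum>i<?K. sW ((-1)^i * (of_int 0 gchoose i)) (YW \<omega> (0 + 1 - int i) (YW v (n + int i) w))
          - sW ((-1)^i * (-1) powi 0 * (of_int 0 gchoose i)) (YW v (0 + n - int i) (YW \<omega> (1 + int i) w)))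
      = YW \<omega> 1 (YW v n w) - YW v n (YW \<omega> 1 w)"
    by (subst sum_lessThan_truncate[of 1]) (auto simp: gbinomial_0_left)
  ultimately show ?thesis
    using jac[of ?K] by simp
qed

lemma YW_weight:
  assumes v: "v \<in> Vgr sV Y \<omega> k" and w: "w \<in> Wgr sW YW \<omega> h"
  shows "YW v n w \<in> Wgr sW YW \<omega> (h + of_int k - of_int n - 1)"
proof -
  have "YW \<omega> 1 (YW v n w) = YW v n (YW \<omega> 1 w) + (YW (Y \<omega> 0 v) (n + 1) w + YW (Y \<omega> 1 v) n w)"
    using YW_commutator_L0[of v n w] by (simp add: diff_eq_eq add.commute)
  also have "\<dots> = sW h (YW v n w) + (sW (- (of_int n + 1)) (YW v n w) + sW (of_int k) (YW v n w))"
    using v w by (simp add: Vgr_def Wgr_def YW_L_minus_1 linear_map_scale[OF linear_YW_right]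
        linear_map_scale[OF linear_YW_left])
  also have "\<dots> = sW (h + (- (of_int n + 1) + of_int k)) (YW v n w)"
    by (simp only: W.vs.scale_left_distrib)
  also have "h + (- (of_int n + 1) + of_int k) = h + of_int k - of_int n - 1"
    by simp
  finally show ?thesis
    by (simp add: Wgr_def)
qed

lemma L1_weight:
  assumes "v \<in> Vgr sV Y \<omega> k"
  shows "Y \<omega> 2 v \<in> Vgr sV Y \<omega> (k - 1)"
proof -
  have "\<exists>c. \<forall>m n v. Y \<omega> (m+1) (Y \<omega> (n+1) v) - Y \<omega> (n+1) (Y \<omega> (m+1) v)
      = sV (of_int (m - n)) (Y \<omega> (m+n+1) v)
        + (if m + n = 0 then sV ((of_int m ^ 3 - of_int m) / 12 * c) v else 0)"
    using VOA unfolding is_VOA_def by (elim conjE)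
  then obtain c where vir: "\<forall>m n v. Y \<omega> (m+1) (Y \<omega> (n+1) v) - Y \<omega> (n+1) (Y \<omega> (m+1) v)
      = sV (of_int (m - n)) (Y \<omega> (m+n+1) v)
        + (if m + n = 0 then sV ((of_int m ^ 3 - of_int m) / 12 * c) v else 0)" ..
  have "Y \<omega> (0+1) (Y \<omega> (1+1) v) - Y \<omega> (1+1) (Y \<omega> (0+1) v) = sV (of_int (0 - 1)) (Y \<omega> (0+1+1) v)"
    using vir[rule_format, of 0 1 v] by simp
  then have comm: "Y \<omega> 1 (Y \<omega> 2 v) - Y \<omega> 2 (Y \<omega> 1 v) = sV (-1) (Y \<omega> 2 v)"
    by simp
  have v: "Y \<omega> 1 v = sV (of_int k) v"
    using assms by (simp add: Vgr_def)
  have "Y \<omega> 1 (Y \<omega> 2 v) = sV (of_int k) (Y \<omega> 2 v) + sV (-1) (Y \<omega> 2 v)"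
    using comm by (simp add: v linear_map_scale[OF linear_Y_right] diff_eq_eq add.commute)
  also have "\<dots> = sV (of_int (k - 1)) (Y \<omega> 2 v)"
    by (simp add: V.vs.scale_left_diff_distrib)
  finally show ?thesis
    by (simp add: Vgr_def)
qed

lemma L1_power_weight: "v \<in> Vgr sV Y \<omega> k \<Longrightarrow> (Y \<omega> 2 ^^ i) v \<in> Vgr sV Y \<omega> (k - int i)"
proof (induction i)
  case (Suc i)
  then show ?case
    using L1_weight by (fastforce simp: algebra_simps)
qed simp

lemma L1_power_scale: "(Y \<omega> 2 ^^ i) (sV a v) = sV a ((Y \<omega> 2 ^^ i) v)"
  by (induction i) (simp_all add: linear_map_scale[OF linear_Y_right])

definition exp_L0 :: "complex \<Rightarrow> 'w \<Rightarrow> 'w" where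
  "exp_L0 l = W.diag (\<lambda>h. exp (h * l))"

lemma linear_exp_L0: "Vector_Spaces.linear sW sW (exp_L0 l)"
  unfolding exp_L0_def by (rule W.linear_diag)

lemma exp_L0_exp_L0: "exp_L0 l1 (exp_L0 l2 w) = exp_L0 (l1 + l2) w"
  unfolding exp_L0_def W.diag_diag by (simp add: distrib_left exp_add)

lemma exp_L0_0: "exp_L0 0 w = w"
  unfolding exp_L0_def using W.diag_one by simp

lemma exp_L0_YW:
  assumes u: "u \<in> Vgr sV Y \<omega> k"
  shows "exp_L0 l (YW u m w) = sW (exp ((of_int k - of_int m - 1) * l)) (YW u m (exp_L0 l w))"
proof -
  let ?c = "gcomps (Wgr sW YW \<omega>) w" and ?S = "{h. gcomps (Wgr sW YW \<omega>) w h \<noteq> 0}"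
  have "exp_L0 l (YW u m w) = (\<Sum>h\<in>?S. exp_L0 l (YW u m (?c h)))"
    by (simp add: W.sum_gcomps linear_map_sum[OF linear_YW_right, symmetric]
        linear_map_sum[OF linear_exp_L0, symmetric])
  also have "\<dots> = (\<Sum>h\<in>?S. sW (exp ((h + of_int k - of_int m - 1) * l)) (YW u m (?c h)))"
    unfolding exp_L0_def
    by (rule sum.cong[OF refl], rule W.diag_eigenvector, rule YW_weight[OF u W.gcomps_in_eigenspace])
  also have "\<dots> = sW (exp ((of_int k - of_int m - 1) * l)) (YW u m (\<Sum>h\<in>?S. sW (exp (h * l)) (?c h)))"
    by (simp add: W.vs.scale_sum_right linear_map_sum[OF linear_YW_right]
        linear_map_scale[OF linear_YW_right] exp_add[symmetric] algebra_simps)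
  also have "(\<Sum>h\<in>?S. sW (exp (h * l)) (?c h)) = exp_L0 l w"
    by (simp add: exp_L0_def W.diag_def Let_def)
  finally show ?thesis .
qed

lemma EL0_eq: "Vector_Spaces.linear sW (*) \<alpha> \<Longrightarrow> EL0 sW YW \<omega> l \<alpha> = (\<lambda>w. \<alpha> (exp_L0 l w))"
  unfolding EL0_def exp_L0_def W.diag_def Let_def
  by (intro ext) (simp add: linear_map_sum linear_map_scale)

lemma dual_exp_L0_YW:
  assumes \<alpha>: "Vector_Spaces.linear sW (*) \<alpha>" and u: "u \<in> Vgr sV Y \<omega> k" and l: "exp l = z"
  shows "\<alpha> (exp_L0 l (YW u m w)) = z powi (k - m - 1) * \<alpha> (YW u m (exp_L0 l w))"
proof -
  have "exp ((of_int k - of_int m - 1) * l) = z powi (k - m - 1)"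
    using exp_power_int[of l "k - m - 1"] l by (simp add: mult.commute)
  then show ?thesis
    by (simp add: exp_L0_YW[OF u] linear_map_scale[OF \<alpha>])
qed

lemma zL0_eq: "zL0 sV Y \<omega> z = V.diag (\<lambda>n. z powi n)"
  unfolding zL0_def V.diag_def by simp

lemma zL0_inverse: "z \<noteq> 0 \<Longrightarrow> zL0 sV Y \<omega> z (zL0 sV Y \<omega> (inverse z) v) = v"
  by (simp add: zL0_eq V.diag_diag V.diag_one field_simps)

lemma Yo_coeff_lincomb:
  assumes \<alpha>: "Vector_Spaces.linear sW (*) \<alpha>"
  shows "Yo_coeff sV Y \<omega> YW \<alpha> v (sW a w1 + w2) j
      = a * Yo_coeff sV Y \<omega> YW \<alpha> v w1 j + Yo_coeff sV Y \<omega> YW \<alpha> v w2 j"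
proof -
  have "\<alpha> (YW u m (sW a w1 + w2)) = a * \<alpha> (YW u m w1) + \<alpha> (YW u m w2)" for u m
    by (simp add: linear_map_add[OF linear_YW_right] linear_map_scale[OF linear_YW_right]
        linear_map_add[OF \<alpha>] linear_map_scale[OF \<alpha>])
  then show ?thesis
    unfolding Yo_coeff_def Let_def by (simp add: sum.distrib sum_distrib_left algebra_simps)
qed

lemma Yo_coeff_rescale:
  assumes \<alpha>: "Vector_Spaces.linear sW (*) \<alpha>" and z: "z \<noteq> 0" and l: "exp l = z"
  shows "Yo_coeff sV Y \<omega> YW (\<lambda>w. \<alpha> (exp_L0 l w)) (zL0 sV Y \<omega> z v) w
      = (\<lambda>j. Yo_coeff sV Y \<omega> YW \<alpha> v (exp_L0 l w) j / z powi j)"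
proof
  fix j
  let ?c = "gcomps (Vgr sV Y \<omega>) v" and ?L1 = "Y \<omega> 2"
  have comps: "gcomps (Vgr sV Y \<omega>) (zL0 sV Y \<omega> z v) = (\<lambda>n. sV (z powi n) (?c n))"
    by (simp add: zL0_eq V.gcomps_diag fun_eq_iff)
  have supp: "{n. sV (z powi n) (?c n) \<noteq> 0} = {n. ?c n \<noteq> 0}"
    using z by simp
  have L1_supp: "{k. (?L1 ^^ k) (sV (z powi n) (?c n)) \<noteq> 0} = {k. (?L1 ^^ k) (?c n) \<noteq> 0}" for n
    using z by (simp add: L1_power_scale)
  \<comment> \<open>L(1)^k of the weight-n component of v has weight n - k; taken with the mode
    m = j - k + 2n - 1, it picks up the factor z^(n-k-m-1) = z^(-n-j) from e^(l L(0)).\<close>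
  have rescaled_term: "\<alpha> (exp_L0 l (YW ((?L1 ^^ k) (sV (z powi n) (?c n))) (j - int k + 2 * n - 1) w))
      = \<alpha> (YW ((?L1 ^^ k) (?c n)) (j - int k + 2 * n - 1) (exp_L0 l w)) / z powi j" for n k
  proof -
    let ?m = "j - int k + 2 * n - 1"
    have "(?L1 ^^ k) (?c n) \<in> Vgr sV Y \<omega> (n - int k)"
      by (rule L1_power_weight[OF V.gcomps_in_eigenspace])
    from dual_exp_L0_YW[OF \<alpha> this l]
    have "\<alpha> (exp_L0 l (YW ((?L1 ^^ k) (?c n)) ?m w))
        = z powi (n - int k - ?m - 1) * \<alpha> (YW ((?L1 ^^ k) (?c n)) ?m (exp_L0 l w))" .
    moreover have "z powi n * z powi (n - int k - ?m - 1) = inverse (z powi j)"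
      using z by (simp add: power_int_add[symmetric] power_int_minus)
    ultimately show ?thesis
      by (simp add: L1_power_scale linear_map_scale[OF linear_YW_left] linear_map_scale[OF linear_exp_L0]
          linear_map_scale[OF \<alpha>] divide_inverse mult.assoc[symmetric])
  qed
  show "Yo_coeff sV Y \<omega> YW (\<lambda>w. \<alpha> (exp_L0 l w)) (zL0 sV Y \<omega> z v) w j
      = Yo_coeff sV Y \<omega> YW \<alpha> v (exp_L0 l w) j / z powi j"
    unfolding Yo_coeff_def Let_def comps supp L1_supp
    by (simp add: rescaled_term sum_divide_distrib)
qed

lemma linear_of_DP: "\<alpha> \<in> DP sV Y \<omega> sW YW z' \<Longrightarrow> Vector_Spaces.linear sW (*) \<alpha>"
  unfolding DP_def dual_def by blast

lemma DP_rescale: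
  assumes \<alpha>: "\<alpha> \<in> DP sV Y \<omega> sW YW z1" and z: "z \<noteq> 0" and l: "exp l = z"
  shows "(\<lambda>w. \<alpha> (exp_L0 l w)) \<in> DP sV Y \<omega> sW YW (z * z1)"
  unfolding DP_def dual_def
proof (intro CollectI conjI allI)
  show "Vector_Spaces.linear sW (*) (\<lambda>w. \<alpha> (exp_L0 l w))"
    using Vector_Spaces.linear_compose[OF linear_exp_L0 linear_of_DP[OF \<alpha>]] by (simp add: comp_def)
  fix v
  \<comment> \<open>Every v is z^L(0) of some v', and the bounds a, b for v' work for v.\<close>
  define v' where "v' = zL0 sV Y \<omega> (inverse z) v"
  obtain a b where ab: "\<forall>w. \<exists>f. conv_out (Yo_coeff sV Y \<omega> YW \<alpha> v' w) z1 f \<and> ratP z1 f a b"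
    using \<alpha> unfolding DP_def by blast
  have "\<exists>f. conv_out (Yo_coeff sV Y \<omega> YW (\<lambda>w. \<alpha> (exp_L0 l w)) v w) (z * z1) f \<and> ratP (z * z1) f a b" for w
  proof -
    obtain f where f: "conv_out (Yo_coeff sV Y \<omega> YW \<alpha> v' (exp_L0 l w)) z1 f" "ratP z1 f a b"
      using ab by blast
    have "Yo_coeff sV Y \<omega> YW (\<lambda>w. \<alpha> (exp_L0 l w)) v w
        = (\<lambda>j. Yo_coeff sV Y \<omega> YW \<alpha> v' (exp_L0 l w) j / z powi j)"
      using Yo_coeff_rescale[OF linear_of_DP[OF \<alpha>] z l, of v'] zL0_inverse[OF z] by (simp add: v'_def)
    then show ?thesis
      using conv_out_rescale[OF f(1) z] ratP_rescale[OF f(2) z] by auto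
  qed
  then show "\<exists>a b. \<forall>w. \<exists>f. conv_out (Yo_coeff sV Y \<omega> YW (\<lambda>w. \<alpha> (exp_L0 l w)) v w) (z * z1) f
      \<and> ratP (z * z1) f a b"
    by blast
qed

lemma EL0_image_DP:
  assumes z: "z \<noteq> 0" and z1: "z1 \<noteq> 0"
  shows "EL0 sW YW \<omega> (lp p z) ` DP sV Y \<omega> sW YW z1 = DP sV Y \<omega> sW YW (z * z1)"
proof
  have l: "exp (lp p z) = z"
    by (rule exp_lp[OF z])
  show "EL0 sW YW \<omega> (lp p z) ` DP sV Y \<omega> sW YW z1 \<subseteq> DP sV Y \<omega> sW YW (z * z1)"
    using DP_rescale[OF _ z l] by (auto simp: EL0_eq linear_of_DP)
  show "DP sV Y \<omega> sW YW (z * z1) \<subseteq> EL0 sW YW \<omega> (lp p z) ` DP sV Y \<omega> sW YW z1"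
  proof
    fix \<beta> assume \<beta>: "\<beta> \<in> DP sV Y \<omega> sW YW (z * z1)"
    have "exp (- lp p z) = inverse z"
      using l by (simp add: exp_minus)
    from DP_rescale[OF \<beta> _ this]
    have \<alpha>: "(\<lambda>w. \<beta> (exp_L0 (- lp p z) w)) \<in> DP sV Y \<omega> sW YW z1"
      using z by (simp add: mult.assoc[symmetric])
    moreover have "EL0 sW YW \<omega> (lp p z) (\<lambda>w. \<beta> (exp_L0 (- lp p z) w)) = \<beta>"
      using linear_of_DP[OF \<alpha>] by (simp add: EL0_eq exp_L0_exp_L0 exp_L0_0)
    ultimately show "\<beta> \<in> EL0 sW YW \<omega> (lp p z) ` DP sV Y \<omega> sW YW z1"
      by (metis imageI)
  qed
qed

lemma YR_eq_pole_coeffs: "YR sV Y \<omega> YW z' v \<alpha> j w = pole_coeffs z' 0 (Yo_coeff sV Y \<omega> YW \<alpha> v w) j"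
  unfolding YR_def pole_coeffs_def pole_expansion_def by simp

lemma YL_eq_pole_coeffs: "YL sV Y \<omega> YW z' v \<alpha> j w = pole_coeffs z' z' (Yo_coeff sV Y \<omega> YW \<alpha> v w) j"
  unfolding YL_def pole_coeffs_def pole_expansion_def by simp

lemma pole_expansion_DP:
  assumes "\<alpha> \<in> DP sV Y \<omega> sW YW z'" "z' \<noteq> 0" "s \<in> {0, z'}"
  shows "pole_expansion z' s (Yo_coeff sV Y \<omega> YW \<alpha> v w) (pole_coeffs z' s (Yo_coeff sV Y \<omega> YW \<alpha> v w))"
proof -
  obtain f a b where "conv_out (Yo_coeff sV Y \<omega> YW \<alpha> v w) z' f" "ratP z' f a b"
    using assms(1) unfolding DP_def by blast
  then show ?thesis
    by (rule pole_expansion_pole_coeffs[OF assms(2,3)])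
qed

lemma linear_pole_coeffs_DP:
  assumes \<alpha>: "\<alpha> \<in> DP sV Y \<omega> sW YW z'" and z': "z' \<noteq> 0" and s: "s \<in> {0, z'}"
  shows "Vector_Spaces.linear sW (*) (\<lambda>w. pole_coeffs z' s (Yo_coeff sV Y \<omega> YW \<alpha> v w) j)"
proof -
  let ?T = "\<lambda>w. pole_coeffs z' s (Yo_coeff sV Y \<omega> YW \<alpha> v w)"
  have lincomb: "?T (sW a w1 + w2) = (\<lambda>j. a * ?T w1 j + ?T w2 j)" for a w1 w2
  proof (rule pole_coeffs_eqI[OF z' s])
    have Yo_eq: "Yo_coeff sV Y \<omega> YW \<alpha> v (sW a w1 + w2)
        = (\<lambda>j. a * Yo_coeff sV Y \<omega> YW \<alpha> v w1 j + Yo_coeff sV Y \<omega> YW \<alpha> v w2 j)"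
      by (simp add: fun_eq_iff Yo_coeff_lincomb[OF linear_of_DP[OF \<alpha>]])
    obtain f A B where f: "conv_out (Yo_coeff sV Y \<omega> YW \<alpha> v (sW a w1 + w2)) z' f" "ratP z' f A B"
      using \<alpha> unfolding DP_def by blast
    from pole_expansion_lincomb[OF z' s pole_expansion_DP[OF \<alpha> z' s] pole_expansion_DP[OF \<alpha> z' s]
        f(1)[unfolded Yo_eq] f(2)]
    show "pole_expansion z' s (Yo_coeff sV Y \<omega> YW \<alpha> v (sW a w1 + w2)) (\<lambda>j. a * ?T w1 j + ?T w2 j)"
      unfolding Yo_eq .
  qed
  show ?thesis
    unfolding Vector_Spaces.linear_iff
  proof (intro conjI allI)
    show "vector_space sW" "vector_space ((*) :: complex \<Rightarrow> complex \<Rightarrow> complex)"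
      using linear_of_DP[OF \<alpha>] by (simp_all add: Vector_Spaces.linear_iff)
    show "?T (x + y) j = ?T x j + ?T y j" for x y
      using fun_cong[OF lincomb[of 1 x y], of j] by simp
    have "?T 0 j = 0"
      using fun_cong[OF lincomb[of 1 0 0], of j] by simp
    then show "?T (sW c x) j = c * ?T x j" for c x
      using fun_cong[OF lincomb[of c x 0], of j] by simp
  qed
qed

lemma EL0_pole_coeffs:
  assumes \<alpha>: "\<alpha> \<in> DP sV Y \<omega> sW YW z1" and z: "z \<noteq> 0" and z1: "z1 \<noteq> 0" and l: "exp l = z"
    and s: "s \<in> {0, z1}"
  shows "EL0 sW YW \<omega> l (\<lambda>w. pole_coeffs z1 s (Yo_coeff sV Y \<omega> YW \<alpha> v w) j)
    = (\<lambda>w. z powi j * pole_coeffs (z * z1) (z * s)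
              (Yo_coeff sV Y \<omega> YW (EL0 sW YW \<omega> l \<alpha>) (zL0 sV Y \<omega> z v) w) j)"
proof -
  let ?T = "\<lambda>w. pole_coeffs z1 s (Yo_coeff sV Y \<omega> YW \<alpha> v w)"
  have "pole_coeffs (z * z1) (z * s) (Yo_coeff sV Y \<omega> YW (\<lambda>w. \<alpha> (exp_L0 l w)) (zL0 sV Y \<omega> z v) w)
      = (\<lambda>j. ?T (exp_L0 l w) j / z powi j)" for w
  proof (rule pole_coeffs_eqI)
    show "z * z1 \<noteq> 0" "z * s \<in> {0, z * z1}"
      using z z1 s by auto
    show "pole_expansion (z * z1) (z * s) (Yo_coeff sV Y \<omega> YW (\<lambda>w. \<alpha> (exp_L0 l w)) (zL0 sV Y \<omega> z v) w)
        (\<lambda>j. ?T (exp_L0 l w) j / z powi j)"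
      unfolding Yo_coeff_rescale[OF linear_of_DP[OF \<alpha>] z l]
      by (rule pole_expansion_rescale[OF z pole_expansion_DP[OF \<alpha> z1 s]])
  qed
  then show ?thesis
    using z by (simp add: EL0_eq[OF linear_pole_coeffs_DP[OF \<alpha> z1 s]] EL0_eq[OF linear_of_DP[OF \<alpha>]])
qed

end

theorem proposition4p18:
  fixes sV :: "complex \<Rightarrow> 'v::ab_group_add \<Rightarrow> 'v" and Y :: "'v \<Rightarrow> int \<Rightarrow> 'v \<Rightarrow> 'v"
    and one \<omega> :: 'v
    and sW :: "complex \<Rightarrow> 'w::ab_group_add \<Rightarrow> 'w" and YW :: "'v \<Rightarrow> int \<Rightarrow> 'w \<Rightarrow> 'w"
    and z z1 :: complex and p :: int
  assumes "is_VOA sV Y one \<omega>" and "is_module sV Y one \<omega> sW YW"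
    and "z \<noteq> 0" and "z1 \<noteq> 0"
  shows "EL0 sW YW \<omega> (lp p z) ` DP sV Y \<omega> sW YW z1 = DP sV Y \<omega> sW YW (z * z1) \<and>
         (\<forall>v \<alpha> j. \<alpha> \<in> DP sV Y \<omega> sW YW z1 \<longrightarrow>
           EL0 sW YW \<omega> (lp p z) (YR sV Y \<omega> YW z1 v \<alpha> j)
           = (\<lambda>w. z powi j * YR sV Y \<omega> YW (z * z1) (zL0 sV Y \<omega> z v) (EL0 sW YW \<omega> (lp p z) \<alpha>) j w)) \<and>
         (\<forall>v \<alpha> j. \<alpha> \<in> DP sV Y \<omega> sW YW z1 \<longrightarrow>
           EL0 sW YW \<omega> (lp p z) (YL sV Y \<omega> YW z1 v \<alpha> j)
           = (\<lambda>w. z powi j * YL sV Y \<omega> YW (z * z1) (zL0 sV Y \<omega> z v) (EL0 sW YW \<omega> (lp p z) \<alpha>) j w))"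
proof -
  interpret vertex_module sV Y one \<omega> sW YW
    using assms(1,2) by unfold_locales
  note EL0_pole_coeffs[OF _ \<open>z \<noteq> 0\<close> \<open>z1 \<noteq> 0\<close> exp_lp[OF \<open>z \<noteq> 0\<close>]]
  then show ?thesis
    using EL0_image_DP[OF \<open>z \<noteq> 0\<close> \<open>z1 \<noteq> 0\<close>]
    by (simp add: YR_eq_pole_coeffs[abs_def] YL_eq_pole_coeffs[abs_def])
qed

end
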